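(* For $k\in(0,\infty)$ let $\mathcal{T}_{(k)}$ be the Weibull law with tail function $\overline{F}_{(k)}(x)=e^{-x^k}$, $x\in[0,\infty)$, and let $l\in\mathbb{N}$, $l\geq2$. Each of the following is equivalent to $k\leq1$: (a) $(\mathcal{T}_{(k)})^{\mathcal{R}}_l\leq_{\mathrm{st}}\mathcal{T}_{(k)}$ for all reset laws $\mathcal{R}$; (b) $(\mathcal{T}_{(k)})^{\delta_r}_l\leq_{\mathrm{st}}\mathcal{T}_{(k)}$ for all $r\in(0,\infty)$; (c) $\lambda^k+l(1-\lambda)^k\geq1$ for all $\lambda\in[0,1]$; (d) $(\mathcal{T}_{(k)})^{\mathrm{Exp}(\mu)}_l\leq_{\mathrm{st}}\mathcal{T}_{(k)}$ for all $\mu\in(0,\infty)$; (e) $\int_0^1e^{-t^k(u^k+l(1-u)^k-1)}\,\mathrm{d}u\leq1$ for all $t\in(0,\infty)$.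
   Context: A reset law is a probability law $\mathcal{R}$ on the Borel sets of $[0,\infty]$ with $\mathcal{R}((0,\infty])>0$ and $\mathcal{R}([0,\infty))>0$. $l$-fold reset: given a law $\mathcal{T}$ on $[0,\infty]$, a reset law $\mathcal{R}$ and $l\in\mathbb{N}$, let $(T^j_i)_{j\in\mathbb{N},\,1\leq i\leq l^{j-1}}$ be i.i.d. with law $\mathcal{T}$ and $(R_j)_{j\in\mathbb{N}}$ an independent i.i.d. sequence with law $\mathcal{R}$; put $M_j:=\min_{1\leq i\leq l^{j-1}}T^j_i$; then $\mathcal{T}^{\mathcal{R}}_l$ is the law of $\tilde T$ defined a.s. by $\tilde T=R_1+\cdots+R_{j-1}+M_j$ on $\{R_1<M_1,\ldots,R_{j-1}<M_{j-1},M_j\leq R_j\}$, $j\in\mathbb{N}$. $\delta_r$ is the Dirac mass at $r$, $\mathrm{Exp}(\mu)$ the exponential law with mean $\mu^{-1}$. $\mathcal{A}\leq_{\mathrm{st}}\mathcal{B}$ means $\mathcal{A}((t,\infty])\leq\mathcal{B}((t,\infty])$ for all $t\in[0,\infty)$. *)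

theory Defs
  imports "HOL-Probability.Probability"
begin

text \<open>Laws on [0,\<infinity>] are probability measures on the Borel sets of ennreal.\<close>

definition reset_law_cond :: "ennreal measure \<Rightarrow> bool" where
  "reset_law_cond R \<longleftrightarrow> prob_space R \<and> sets R = sets borel
     \<and> emeasure R {0<..} > 0 \<and> emeasure R {..<top} > 0"

text \<open>Underlying probability space: i.i.d. family T(j,i) with law T (only i < l^j is used
  at stage j, stages indexed from 0) and an independent i.i.d. sequence R(j) with law R.\<close>

definition reset_space :: "ennreal measure \<Rightarrow> ennreal measure \<Rightarrow>
    ((nat \<times> nat \<Rightarrow> ennreal) \<times> (nat \<Rightarrow> ennreal)) measure" where
  "reset_space T R = (PiM UNIV (\<lambda>_::nat\<times>nat. T)) \<Otimes>\<^sub>M (PiM UNIV (\<lambda>_::nat. R))"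

definition reset_min :: "nat \<Rightarrow> (nat \<times> nat \<Rightarrow> ennreal) \<Rightarrow> nat \<Rightarrow> ennreal" where
  "reset_min l Tv j = Min ((\<lambda>i. Tv (j, i)) ` {..<l ^ j})"

definition reset_time :: "nat \<Rightarrow> (nat \<times> nat \<Rightarrow> ennreal) \<times> (nat \<Rightarrow> ennreal) \<Rightarrow> ennreal" where
  "reset_time l \<omega> =
     (let Tv = fst \<omega>; Rv = snd \<omega>; M = reset_min l Tv in
      if \<exists>j. M j \<le> Rv j
      then (let j = (LEAST j. M j \<le> Rv j) in (\<Sum>m<j. Rv m) + M j)
      else top)"

definition reset_law :: "ennreal measure \<Rightarrow> ennreal measure \<Rightarrow> nat \<Rightarrow> ennreal measure" where
  "reset_law T R l = distr (reset_space T R) borel (reset_time l)"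

definition st_le :: "ennreal measure \<Rightarrow> ennreal measure \<Rightarrow> bool" where
  "st_le A B \<longleftrightarrow> (\<forall>t::ennreal. t \<noteq> top \<longrightarrow> emeasure A {t<..} \<le> emeasure B {t<..})"

definition weibull_law :: "real \<Rightarrow> ennreal measure" where
  "weibull_law k = distr (density lborel
      (\<lambda>x::real. ennreal (if x > 0 then k * x powr (k - 1) * exp (- (x powr k)) else 0)))
      borel ennreal"

definition dirac_law :: "real \<Rightarrow> ennreal measure" where
  "dirac_law r = return borel (ennreal r)"

definition exp_law :: "real \<Rightarrow> ennreal measure" where
  "exp_law \<mu> = distr (density lborel (\<lambda>x. ennreal (exponential_density \<mu> x))) borel ennreal"

end

theory Submission
  imports Defs "HOL-Real_Asymp.Real_Asymp"
begin

(* For k \<le> 1 the Weibull law is new worse than used: (x + y)^k \<le> x^k + y^k gives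
   F(x + y) \<ge> F(x) F(y) for its tail F(x) = exp (-x^k). Given the resets, the event that the
   reset time exceeds t forces every sample of stage m to outlive the part of [0, t] spent in
   stage m. These parts add up to t unless the first n resets all occur before t, an event of
   probability at most q^n with q = E exp (-R^k) < 1; so the tail of the reset law is at most
   F(t) + q^n for every n.
   For k > 1 choose \<delta> with (1 - \<delta>)^k + l (2 \<delta>)^k < 1. Resetting once at time about 1 - \<delta>
   and then surviving a stage of l samples for time 2 \<delta> beats the Weibull tail at a suitable
   time: directly for the deterministic reset 1 - \<delta>, and for Exp(\<mu>) with \<mu> small by comparing
   derivatives at \<mu> = 0. The same \<delta> violates (c) at \<lambda> = 1 - \<delta> and makes the integral in (e)
   exceed 1 for large t. *)

section \<open>Tails of the Weibull and exponential laws\<close>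

lemma emeasure_density_greaterThan_antiderivative:
  fixes f F :: "real \<Rightarrow> real"
  assumes f: "f \<in> borel_measurable borel"
    and D: "\<And>x. c < x \<Longrightarrow> DERIV F x :> f x" and C: "\<And>x. c < x \<Longrightarrow> isCont f x"
    and N: "\<And>x. c < x \<Longrightarrow> 0 \<le> f x"
    and A: "(F \<longlongrightarrow> F c) (at_right c)" and B: "(F \<longlongrightarrow> 0) at_top"
  shows "emeasure (density lborel (\<lambda>x. ennreal (f x))) {c<..} = ennreal (- F c)"
proof -
  have ei: "einterval (ereal c) \<infinity> = {c<..}" by (auto simp: einterval_def)
  have A': "((F \<circ> real_of_ereal) \<longlongrightarrow> F c) (at_right (ereal c))"
    using A by (simp add: ereal_tendsto_simps1)
  have B': "((F \<circ> real_of_ereal) \<longlongrightarrow> 0) (at_left (\<infinity>::ereal))"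
    using B by (simp add: ereal_tendsto_simps1)
  have si: "set_integrable lborel {c<..} f" and eq: "(LBINT x=ereal c..\<infinity>. f x) = 0 - F c"
    using interval_integral_FTC_nonneg[of "ereal c" \<infinity> F f "F c" 0, OF _ _ _ _ A' B'] D C N ei
    by auto
  have "emeasure (density lborel (\<lambda>x. ennreal (f x))) {c<..} = (\<integral>\<^sup>+ x. ennreal (indicator {c<..} x *\<^sub>R f x) \<partial>lborel)"
    using f by (subst emeasure_density) (auto intro!: nn_integral_cong split: split_indicator)
  also have "\<dots> = ennreal (LINT x|lborel. indicator {c<..} x *\<^sub>R f x)"
    using si N by (intro nn_integral_eq_integral) (auto simp: set_integrable_def split: split_indicator)
  also have "(LINT x|lborel. indicator {c<..} x *\<^sub>R f x) = - F c"
    using eq ei by (simp add: interval_lebesgue_integral_def set_lebesgue_integral_def)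
  finally show ?thesis .
qed

lemma vimage_ennreal_greaterThan: "0 \<le> c \<Longrightarrow> ennreal -` {ennreal c<..} = {c<..}"
  by (auto simp: ennreal_less_iff)

definition weibull_tail :: "real \<Rightarrow> ennreal \<Rightarrow> ennreal" where
  "weibull_tail k x = (if x = top then 0 else ennreal (exp (- (enn2real x powr k))))"

lemma weibull_tail_ennreal: "0 \<le> c \<Longrightarrow> weibull_tail k (ennreal c) = ennreal (exp (- (c powr k)))"
  by (simp add: weibull_tail_def)

lemma emeasure_weibull_density_greaterThan:
  fixes k c :: real assumes k: "k > 0" and c: "c \<ge> 0"
  shows "emeasure (density lborel (\<lambda>x::real. ennreal (if x > 0 then k * x powr (k - 1) * exp (- (x powr k)) else 0))) {c<..}
     = ennreal (exp (- (c powr k)))"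
proof -
  let ?f = "\<lambda>x::real. if x > 0 then k * x powr (k - 1) * exp (- (x powr k)) else 0"
  let ?F = "\<lambda>x::real. - exp (- (x powr k))"
  have "emeasure (density lborel (\<lambda>x. ennreal (?f x))) {c<..} = ennreal (- ?F c)"
  proof (rule emeasure_density_greaterThan_antiderivative)
    show "?f \<in> borel_measurable borel" by measurable
    fix x :: real assume "c < x"
    then have x: "x > 0" using c by simp
    have "DERIV ?F x :> exp (- (x powr k)) * (k * x powr (k - 1))"
      using x by (auto intro!: derivative_eq_intros simp: powr_diff field_simps)
    then show "DERIV ?F x :> ?f x" using x by (simp add: mult.commute mult.left_commute)
    have "eventually (\<lambda>y. ?f y = k * y powr (k - 1) * exp (- (y powr k))) (nhds x)"
      using eventually_nhds_in_open[of "{0<..}" x] x by (auto elim!: eventually_mono)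
    then show "isCont ?f x"
      using x by (subst isCont_cong) (auto intro!: continuous_intros)
    show "0 \<le> ?f x" using k by auto
  next
    have "eventually (\<lambda>x. 0 \<le> x) (at_right c)"
      by (rule eventually_mono[OF eventually_at_right_less]) (use c in simp)
    then show "(?F \<longlongrightarrow> ?F c) (at_right c)"
      using k by (auto intro!: tendsto_intros)
    show "(?F \<longlongrightarrow> 0) at_top" using k by real_asymp
  qed
  then show ?thesis by simp
qed

lemma emeasure_weibull_law_greaterThan:
  assumes k: "k > 0"
  shows "emeasure (weibull_law k) {x<..} = weibull_tail k x"
proof (cases "x = top")
  case False
  then obtain c where c: "x = ennreal c" "0 \<le> c" by (cases x) auto
  then show ?thesis unfolding weibull_law_def
    by (subst emeasure_distr) (auto simp: vimage_ennreal_greaterThan weibull_tail_ennreal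
        emeasure_weibull_density_greaterThan[OF k])
qed (simp add: weibull_tail_def greaterThan_def)

lemma sets_weibull_law [simp]: "sets (weibull_law k) = sets borel"
  by (simp add: weibull_law_def)

lemma prob_space_weibull_law: assumes k: "k > 0" shows "prob_space (weibull_law k)"
proof
  let ?f = "\<lambda>x::real. ennreal (if x > 0 then k * x powr (k - 1) * exp (- (x powr k)) else 0)"
  have "emeasure (weibull_law k) (space (weibull_law k)) = emeasure (density lborel ?f) UNIV"
    unfolding weibull_law_def by (subst emeasure_distr) auto
  also have "\<dots> = emeasure (density lborel ?f) {0<..}"
    by (subst (1 2) emeasure_density) (auto intro!: nn_integral_cong split: split_indicator)
  also have "\<dots> = 1" using emeasure_weibull_density_greaterThan[OF k, of 0] k by simp
  finally show "emeasure (weibull_law k) (space (weibull_law k)) = 1" .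
qed

lemma sets_exp_law [simp]: "sets (exp_law m) = sets borel"
  by (simp add: exp_law_def)

lemma prob_space_exp_law: "m > 0 \<Longrightarrow> prob_space (exp_law m)"
  unfolding exp_law_def
  by (rule prob_space.prob_space_distr[OF prob_space_exponential_density]) auto

lemma emeasure_exp_law_greaterThan:
  fixes m c :: real assumes m: "m > 0" and c: "c \<ge> 0"
  shows "emeasure (exp_law m) {ennreal c<..} = ennreal (exp (- c * m))"
proof -
  let ?F = "\<lambda>x::real. - exp (- x * m)"
  have "emeasure (density lborel (\<lambda>x. ennreal (exponential_density m x))) {c<..} = ennreal (- ?F c)"
  proof (rule emeasure_density_greaterThan_antiderivative)
    fix x :: real assume "c < x"
    then have x: "x > 0" using c by simp
    have "DERIV ?F x :> exp (- x * m) * m"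
      by (auto intro!: derivative_eq_intros)
    then show "DERIV ?F x :> exponential_density m x" using x by (simp add: exponential_density_def mult.commute)
    have "eventually (\<lambda>y. y \<in> {0<..}) (nhds x)"
      using eventually_nhds_in_open[of "{0<..}" x] x by auto
    then have "eventually (\<lambda>y. exponential_density m y = m * exp (- y * m)) (nhds x)"
      by eventually_elim (simp add: exponential_density_def)
    then show "isCont (exponential_density m) x"
      by (subst isCont_cong) (auto intro!: continuous_intros)
    show "0 \<le> exponential_density m x" using m by (simp add: exponential_density_nonneg)
  next
    show "(?F \<longlongrightarrow> ?F c) (at_right c)" by (auto intro!: tendsto_intros)
    show "(?F \<longlongrightarrow> 0) at_top" using m by real_asymp
  qed measurable
  then show ?thesis
    unfolding exp_law_def by (subst emeasure_distr) (auto simp: vimage_ennreal_greaterThan[OF c])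
qed

lemma emeasure_exp_law_greaterThanAtMost:
  fixes m a b :: real assumes m: "m > 0" and a: "0 \<le> a" and ab: "a \<le> b"
  shows "emeasure (exp_law m) {ennreal a<..ennreal b} = ennreal (exp (- a * m) - exp (- b * m))"
proof -
  interpret prob_space "exp_law m" using prob_space_exp_law[OF m] .
  have "{ennreal a<..ennreal b} = {ennreal a<..} - {ennreal b<..}" by auto
  then have "emeasure (exp_law m) {ennreal a<..ennreal b} = emeasure (exp_law m) {ennreal a<..} - emeasure (exp_law m) {ennreal b<..}"
    using ab by (simp add: emeasure_Diff ennreal_leI)
  also have "\<dots> = ennreal (exp (- a * m) - exp (- b * m))"
    using a ab by (simp add: emeasure_exp_law_greaterThan[OF m] ennreal_minus)
  finally show ?thesis .
qed

lemma reset_law_cond_exp_law: assumes m: "m > 0" shows "reset_law_cond (exp_law m)"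
proof -
  interpret prob_space "exp_law m" using prob_space_exp_law[OF m] .
  have "emeasure (exp_law m) {ennreal 0<..ennreal 1} > 0"
    using emeasure_exp_law_greaterThanAtMost[OF m, of 0 1] m by simp
  also have "emeasure (exp_law m) {ennreal 0<..ennreal 1} \<le> emeasure (exp_law m) {..<top}"
    by (intro emeasure_mono) (auto intro: order.strict_trans1[OF _ ennreal_one_less_top])
  finally show ?thesis
    using emeasure_exp_law_greaterThan[OF m, of 0] prob_space_exp_law[OF m]
    by (simp add: reset_law_cond_def)
qed

lemma sets_dirac_law [simp]: "sets (dirac_law r) = sets borel"
  by (simp add: dirac_law_def)

lemma prob_space_dirac_law: "prob_space (dirac_law r)"
  by (simp add: dirac_law_def prob_space_return)

lemma reset_law_cond_dirac_law: "r > 0 \<Longrightarrow> reset_law_cond (dirac_law r)"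
  by (simp add: reset_law_cond_def dirac_law_def prob_space_return)

section \<open>The reset time\<close>

lemma reset_min_0 [simp]: "reset_min l Tv 0 = Tv (0, 0)"
  by (simp add: reset_min_def lessThan_Suc)

lemma less_reset_min_iff: "l \<ge> 1 \<Longrightarrow> c < reset_min l Tv j \<longleftrightarrow> (\<forall>i<l ^ j. c < Tv (j, i))"
  unfolding reset_min_def by (subst Min_gr_iff) (auto simp: lessThan_empty_iff)

lemma reset_time_stopping_stage:
  assumes "\<exists>j. reset_min l (fst \<omega>) j \<le> snd \<omega> j"
  obtains J where "reset_time l \<omega> = (\<Sum>m<J. snd \<omega> m) + reset_min l (fst \<omega>) J"
    and "reset_min l (fst \<omega>) J \<le> snd \<omega> J" and "\<And>m. m < J \<Longrightarrow> snd \<omega> m < reset_min l (fst \<omega>) m"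
proof -
  define J where "J = (LEAST j. reset_min l (fst \<omega>) j \<le> snd \<omega> j)"
  have stop: "reset_min l (fst \<omega>) J \<le> snd \<omega> J" unfolding J_def using assms by (metis LeastI)
  have before: "m < J \<Longrightarrow> snd \<omega> m < reset_min l (fst \<omega>) m" for m
    unfolding J_def using not_less_Least not_le by blast
  show ?thesis using that[OF _ stop before] assms by (simp add: reset_time_def J_def Let_def)
qed

lemma reset_time_eq_top:
  "\<not> (\<exists>j. reset_min l (fst \<omega>) j \<le> snd \<omega> j) \<Longrightarrow> reset_time l \<omega> = top"
  by (simp add: reset_time_def)

definition reset_time_at_stage :: "nat \<Rightarrow> (nat \<times> nat \<Rightarrow> ennreal) \<times> (nat \<Rightarrow> ennreal) \<Rightarrow> nat \<Rightarrow> ennreal" where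
  "reset_time_at_stage l \<omega> j =
     (if (\<forall>m<j. snd \<omega> m < reset_min l (fst \<omega>) m) \<and> reset_min l (fst \<omega>) j \<le> snd \<omega> j
      then (\<Sum>m<j. snd \<omega> m) + reset_min l (fst \<omega>) j else top)"

lemma reset_time_eq_INF: "reset_time l \<omega> = (INF j. reset_time_at_stage l \<omega> j)"
proof (cases "\<exists>j. reset_min l (fst \<omega>) j \<le> snd \<omega> j")
  case True
  obtain J where J: "reset_time l \<omega> = (\<Sum>m<J. snd \<omega> m) + reset_min l (fst \<omega>) J"
    and stop: "reset_min l (fst \<omega>) J \<le> snd \<omega> J" and before: "\<And>m. m < J \<Longrightarrow> snd \<omega> m < reset_min l (fst \<omega>) m"
    using reset_time_stopping_stage[OF True] by blast
  have "reset_time_at_stage l \<omega> j = (if j = J then reset_time l \<omega> else top)" for j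
    using stop by (cases j J rule: linorder_cases)
      (auto simp: reset_time_at_stage_def J not_less dest: before leD)
  then show ?thesis by (intro antisym INF_greatest INF_lower2[of J]) auto
next
  case False
  then show ?thesis by (simp add: reset_time_at_stage_def reset_time_eq_top)
qed

lemma sets_reset_space:
  assumes "sets T = sets borel" "sets R = sets borel"
  shows "sets (reset_space T R) = sets (reset_space borel borel)"
  unfolding reset_space_def using assms by (intro sets_pair_measure_cong sets_PiM_cong) auto

lemma measurable_reset_min [measurable]:
  "(\<lambda>\<omega>. reset_min l (fst \<omega>) m) \<in> borel_measurable (reset_space borel borel)"
  unfolding reset_min_def reset_space_def by measurable

lemma measurable_reset_component [measurable]:
  "(\<lambda>\<omega>. snd \<omega> m) \<in> borel_measurable (reset_space borel borel)"
  unfolding reset_space_def by measurable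

lemma measurable_reset_time:
  assumes "sets T = sets borel" "sets R = sets borel"
  shows "reset_time l \<in> borel_measurable (reset_space T R)"
proof -
  have "(\<lambda>\<omega>. reset_time_at_stage l \<omega> j) \<in> borel_measurable (reset_space borel borel)" for j
    unfolding reset_time_at_stage_def by measurable
  then have "reset_time l \<in> borel_measurable (reset_space borel borel)"
    unfolding reset_time_eq_INF[abs_def] by (intro borel_measurable_INF) auto
  then show ?thesis using measurable_cong_sets[OF sets_reset_space[OF assms] refl] by blast
qed

section \<open>Cylinder events and a lower bound for reset laws\<close>

lemma
  fixes M :: "'b::topological_space measure"
  assumes M: "prob_space M" "sets M = sets borel"
    and I: "finite I" "\<And>i. i \<in> I \<Longrightarrow> X i \<in> sets borel"
  shows sets_PiM_cylinder: "{f. \<forall>i\<in>I. f i \<in> X i} \<in> sets (PiM UNIV (\<lambda>_::'a. M))"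
    and emeasure_PiM_cylinder:
      "emeasure (PiM UNIV (\<lambda>_::'a. M)) {f. \<forall>i\<in>I. f i \<in> X i} = (\<Prod>i\<in>I. emeasure M (X i))"
proof -
  interpret M: prob_space M by (rule M(1))
  interpret product_prob_space "\<lambda>_::'a. M" UNIV by unfold_locales
  have "space (PiM UNIV (\<lambda>_::'a. M)) = UNIV"
    using sets_eq_imp_space_eq[OF M(2)] by (simp add: space_PiM PiE_UNIV_domain)
  then have cyl: "{f. \<forall>i\<in>I. f i \<in> X i} = {f\<in>space (PiM UNIV (\<lambda>_::'a. M)). \<forall>i\<in>I. f i \<in> X i}"
    by simp
  show "{f. \<forall>i\<in>I. f i \<in> X i} \<in> sets (PiM UNIV (\<lambda>_::'a. M))"
    unfolding cyl
  proof (rule sets.sets_Collect_finite_All[OF _ I(1)])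
    fix i assume "i \<in> I"
    then have "(\<lambda>f. f i) -` X i \<inter> space (PiM UNIV (\<lambda>_::'a. M)) \<in> sets (PiM UNIV (\<lambda>_::'a. M))"
      using I(2) M(2) by (intro measurable_sets[OF measurable_component_singleton]) auto
    then show "{f \<in> space (PiM UNIV (\<lambda>_::'a. M)). f i \<in> X i} \<in> sets (PiM UNIV (\<lambda>_::'a. M))"
      by (simp add: vimage_def Int_def conj_commute)
  qed
  show "emeasure (PiM UNIV (\<lambda>_::'a. M)) {f. \<forall>i\<in>I. f i \<in> X i} = (\<Prod>i\<in>I. emeasure M (X i))"
    unfolding cyl using I M(2) by (subst emeasure_PiM_Collect) auto
qed

lemma space_reset_space:
  "sets T = sets borel \<Longrightarrow> sets R = sets borel \<Longrightarrow> space (reset_space T R) = UNIV"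
  by (simp add: reset_space_def space_pair_measure space_PiM PiE_UNIV_domain sets_eq_imp_space_eq)

lemma
  assumes T: "prob_space T" "sets T = sets borel" and R: "prob_space R" "sets R = sets borel"
    and I: "finite I" "\<And>x. x \<in> I \<Longrightarrow> X x \<in> sets borel"
    and J: "finite J" "\<And>m. m \<in> J \<Longrightarrow> Y m \<in> sets borel"
  shows sets_reset_space_cylinder:
      "{Tv. \<forall>x\<in>I. Tv x \<in> X x} \<times> {Rv. \<forall>m\<in>J. Rv m \<in> Y m} \<in> sets (reset_space T R)"
    and emeasure_reset_space_cylinder:
      "emeasure (reset_space T R) ({Tv. \<forall>x\<in>I. Tv x \<in> X x} \<times> {Rv. \<forall>m\<in>J. Rv m \<in> Y m})
        = (\<Prod>x\<in>I. emeasure T (X x)) * (\<Prod>m\<in>J. emeasure R (Y m))"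
  using assms unfolding reset_space_def
  by (simp_all add: sigma_finite_measure.emeasure_pair_measure_Times prob_space_imp_sigma_finite
      prob_space_PiM sets_PiM_cylinder emeasure_PiM_cylinder)

lemma emeasure_reset_law_greaterThan:
  assumes "sets T = sets borel" "sets R = sets borel"
  shows "emeasure (reset_law T R l) {t<..} = emeasure (reset_space T R) (reset_time l -` {t<..})"
  unfolding reset_law_def using measurable_reset_time[OF assms] space_reset_space[OF assms]
  by (subst emeasure_distr) auto

lemma add_less_add_ennreal: "(a::ennreal) \<le> x \<Longrightarrow> c < y \<Longrightarrow> a < top \<Longrightarrow> a + c < x + y"
proof -
  assume "a \<le> x" "c < y" "a < top"
  then have "a + c < a + y" by (simp add: ennreal_add_left_cancel_less)
  also have "\<dots> \<le> x + y" using \<open>a \<le> x\<close> by (rule add_right_mono)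
  finally show ?thesis .
qed

lemma less_reset_time_first_stage:
  assumes "t < fst \<omega> (0,0)" "t < snd \<omega> 0" "t < top"
  shows "t < reset_time l \<omega>"
proof (cases "\<exists>j. reset_min l (fst \<omega>) j \<le> snd \<omega> j")
  case True
  then obtain J where J: "reset_time l \<omega> = (\<Sum>m<J. snd \<omega> m) + reset_min l (fst \<omega>) J"
    using reset_time_stopping_stage by blast
  show ?thesis
  proof (cases "J = 0")
    case False
    then have "snd \<omega> 0 \<le> (\<Sum>m<J. snd \<omega> m)" by (intro member_le_sum) auto
    also have "\<dots> \<le> reset_time l \<omega>" unfolding J by simp
    finally show ?thesis using assms by simp
  qed (use J assms in simp)
qed (use assms reset_time_eq_top in auto)

lemma less_reset_time_second_stage:
  assumes l: "l \<ge> 1" and T0: "b < fst \<omega> (0,0)" and T1: "\<And>i. i < l \<Longrightarrow> c < fst \<omega> (1,i)"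
    and R0: "a \<le> snd \<omega> 0" "snd \<omega> 0 \<le> b" and R1: "c < snd \<omega> 1"
    and t: "t \<le> a + c" "b \<le> t" "t < top"
  shows "t < reset_time l \<omega>"
proof (cases "\<exists>j. reset_min l (fst \<omega>) j \<le> snd \<omega> j")
  case True
  then obtain J where J: "reset_time l \<omega> = (\<Sum>m<J. snd \<omega> m) + reset_min l (fst \<omega>) J"
    and stop: "reset_min l (fst \<omega>) J \<le> snd \<omega> J"
    using reset_time_stopping_stage by blast
  have a: "a < top" using R0 t by (meson order.trans order.strict_trans1)
  have "J \<noteq> 0"
  proof
    assume "J = 0"
    then have "fst \<omega> (0,0) \<le> b" using stop R0(2) by simp
    then show False using T0 by simp
  qed
  then consider "J = 1" | "2 \<le> J" by linarith
  then show ?thesis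
  proof cases
    case 1
    have "c < reset_min l (fst \<omega>) 1" using less_reset_min_iff[OF l] T1 by simp
    then have "a + c < snd \<omega> 0 + reset_min l (fst \<omega>) 1"
      using R0 a by (intro add_less_add_ennreal)
    then show ?thesis using t unfolding J 1 by simp
  next
    case 2
    have "a + c < snd \<omega> 0 + snd \<omega> 1"
      using R0 R1 a by (intro add_less_add_ennreal)
    also have "\<dots> \<le> (\<Sum>m<J. snd \<omega> m)"
      using 2 sum_mono2[of "{..<J}" "{0, 1}" "snd \<omega>"] by auto
    also have "\<dots> \<le> reset_time l \<omega>" unfolding J by simp
    finally show ?thesis using t by simp
  qed
qed (use t reset_time_eq_top in auto)

text \<open>Two disjoint ways of outliving t: stage 0 outlives t without a reset, or the stage-0 reset
  falls in Y before the stage-0 sample ends and then all of stage 1 outlives c.\<close>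

lemma reset_law_tail_lower_bound:
  fixes T R :: "ennreal measure"
  assumes T: "prob_space T" "sets T = sets borel" and R: "prob_space R" "sets R = sets borel"
    and l: "l \<ge> 1" and Y: "Y \<in> sets borel" "Y \<subseteq> {a..b}" and t: "b \<le> t" "t \<le> a + c" "t < top"
  shows "emeasure T {t<..} * emeasure R {t<..}
      + emeasure T {b<..} * emeasure T {c<..} ^ l * (emeasure R Y * emeasure R {c<..})
    \<le> emeasure (reset_law T R l) {t<..}"
proof -
  define I where "I = insert (0::nat, 0::nat) ((\<lambda>i. (1, i)) ` {..<l})"
  define X where "X x = (if x = (0::nat, 0::nat) then {b<..} else {c<..})" for x
  define Z where "Z m = (if m = (0::nat) then Y else {c<..})" for m
  define EA where "EA = {Tv. \<forall>x\<in>{(0::nat, 0::nat)}. Tv x \<in> {t<..}} \<times> {Rv. \<forall>m\<in>{0::nat}. Rv m \<in> {t<..}}"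
  define EB where "EB = {Tv. \<forall>x\<in>I. Tv x \<in> X x} \<times> {Rv. \<forall>m\<in>{0,1}. Rv m \<in> Z m}"
  have cyl: "finite I" "\<And>x. X x \<in> sets borel" "\<And>m. Z m \<in> sets borel"
    using Y by (auto simp: I_def X_def Z_def)
  have sets: "EA \<in> sets (reset_space T R)" "EB \<in> sets (reset_space T R)"
    unfolding EA_def EB_def by (rule sets_reset_space_cylinder[OF T R]; use cyl in simp)+
  have "(\<Prod>x\<in>I. emeasure T (X x)) = emeasure T {b<..} * emeasure T {c<..} ^ l"
    unfolding I_def by (subst prod.insert) (auto simp: prod.reindex inj_on_def X_def)
  then have "emeasure (reset_space T R) EB
      = emeasure T {b<..} * emeasure T {c<..} ^ l * (emeasure R Y * emeasure R {c<..})"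
    unfolding EB_def using T R cyl by (subst emeasure_reset_space_cylinder) (auto simp: Z_def)
  moreover have "emeasure (reset_space T R) EA = emeasure T {t<..} * emeasure R {t<..}"
    unfolding EA_def using T R by (subst emeasure_reset_space_cylinder) auto
  moreover have "EA \<inter> EB = {}"
    using Y(2) t(1) by (fastforce simp: EA_def EB_def Z_def)
  moreover have "EA \<union> EB \<subseteq> reset_time l -` {t<..}"
  proof safe
    fix Tv Rv assume "(Tv, Rv) \<in> EA"
    then show "(Tv, Rv) \<in> reset_time l -` {t<..}"
      using less_reset_time_first_stage[of t "(Tv, Rv)"] t by (simp add: EA_def)
  next
    fix Tv Rv assume "(Tv, Rv) \<in> EB"
    then have "b < Tv (0,0)" "\<And>i. i < l \<Longrightarrow> c < Tv (1,i)" "Rv 0 \<in> Y" "c < Rv 1"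
      by (auto simp: EB_def I_def X_def Z_def)
    then show "(Tv, Rv) \<in> reset_time l -` {t<..}"
      using less_reset_time_second_stage[OF l, of b "(Tv, Rv)" c a] Y(2) t by auto
  qed
  then have "emeasure (reset_space T R) (EA \<union> EB) \<le> emeasure (reset_space T R) (reset_time l -` {t<..})"
    using measurable_sets[OF measurable_reset_time[OF T(2) R(2)], of "{t<..}" l]
    by (intro emeasure_mono) (auto simp: space_reset_space[OF T(2) R(2)])
  ultimately show ?thesis
    using plus_emeasure[OF sets] emeasure_reset_law_greaterThan[OF T(2) R(2)] by simp
qed

section \<open>Stochastic domination for k at most 1\<close>

lemma powr_ge_self: "0 \<le> x \<Longrightarrow> x \<le> 1 \<Longrightarrow> k \<le> 1 \<Longrightarrow> x \<le> x powr (k::real)"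
  using powr_mono'[of k 1 x] by (cases "x = 0") auto

lemma powr_add_le_add_powr:
  fixes a b k :: real
  assumes k: "0 < k" "k \<le> 1" and a: "0 \<le> a" and b: "0 \<le> b"
  shows "(a + b) powr k \<le> a powr k + b powr k"
proof (cases "a + b = 0")
  case False
  define s where "s = a + b"
  have s: "s > 0" using False a b by (simp add: s_def)
  have "a / s + b / s = 1" using s by (simp add: s_def add_divide_distrib[symmetric])
  moreover have "a / s \<le> (a / s) powr k" "b / s \<le> (b / s) powr k"
    using a b s k by (auto intro!: powr_ge_self simp: s_def)
  ultimately have "s powr k * 1 \<le> s powr k * ((a / s) powr k + (b / s) powr k)"
    by (intro mult_left_mono) auto
  also have "\<dots> = a powr k + b powr k"
    using s by (simp add: powr_divide distrib_left)
  finally show ?thesis by (simp add: s_def)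
qed (use a b in simp)

lemma weibull_tail_le_1: "weibull_tail k x \<le> 1"
  by (simp add: weibull_tail_def)

lemma weibull_tail_0 [simp]: "weibull_tail k 0 = 1"
  by (simp add: weibull_tail_def)

lemma weibull_tail_less_1:
  assumes "0 < k" "0 < x"
  shows "weibull_tail k x < 1"
proof (cases x)
  case (real c)
  then have "exp (- (c powr k)) < 1" using assms by simp
  then show ?thesis using real by (simp add: weibull_tail_ennreal ennreal_less_iff ennreal_1[symmetric] del: ennreal_1)
qed (simp add: weibull_tail_def)

lemma measurable_weibull_tail [measurable]: "weibull_tail k \<in> borel_measurable borel"
  unfolding weibull_tail_def by measurable

lemma weibull_tail_mult_le_add:
  assumes k: "0 < k" "k \<le> 1"
  shows "weibull_tail k x * weibull_tail k y \<le> weibull_tail k (x + y)"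
proof (cases "x = top \<or> y = top")
  case False
  then obtain a b where ab: "x = ennreal a" "y = ennreal b" "0 \<le> a" "0 \<le> b"
    by (cases x; cases y) auto
  have "exp (- (a powr k)) * exp (- (b powr k)) \<le> exp (- ((a + b) powr k))"
    using powr_add_le_add_powr[OF k ab(3,4)] by (simp add: exp_add[symmetric])
  then have "ennreal (exp (- (a powr k))) * ennreal (exp (- (b powr k))) \<le> ennreal (exp (- ((a + b) powr k)))"
    by (simp add: ennreal_mult'[symmetric] ennreal_leI)
  then show ?thesis
    using ab by (simp add: weibull_tail_ennreal flip: ennreal_plus)
next
  case True
  then show ?thesis by (auto simp: weibull_tail_def)
qed

lemma prod_weibull_tail_le_sum:
  assumes k: "0 < k" "k \<le> 1" and A: "finite A"
  shows "(\<Prod>m\<in>A. weibull_tail k (c m)) \<le> weibull_tail k (\<Sum>m\<in>A. c m)"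
  using A
proof induction
  case (insert m A)
  have "(\<Prod>m\<in>insert m A. weibull_tail k (c m)) \<le> weibull_tail k (c m) * weibull_tail k (\<Sum>m\<in>A. c m)"
    using insert by (simp add: mult_left_mono)
  also have "\<dots> \<le> weibull_tail k (\<Sum>m\<in>insert m A. c m)"
    using insert weibull_tail_mult_le_add[OF k] by simp
  finally show ?case .
qed simp

text \<open>The part of [0, t] spent in stage m, given the reset times Rv.\<close>

definition clipped_reset :: "ennreal \<Rightarrow> (nat \<Rightarrow> ennreal) \<Rightarrow> nat \<Rightarrow> ennreal" where
  "clipped_reset t Rv m = min (Rv m) (t - (\<Sum>j<m. Rv j))"

lemma min_add_min_diff_ennreal:
  fixes x y t :: ennreal
  assumes t: "t < top"
  shows "min x t + min y (t - x) = min (x + y) t"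
proof (cases "t \<le> x")
  case True
  then have "t - x = 0" using t by (simp add: diff_eq_0_iff_ennreal)
  moreover have "t \<le> x + y" using add_increasing2[of y t x] True by simp
  ultimately show ?thesis using True by (simp add: min_def)
next
  case False
  then have e: "x + (t - x) = t" by (simp add: add_diff_inverse_ennreal)
  have "min x t + min y (t - x) = min (x + y) (x + (t - x))"
    using False add_left_mono[of y "t - x" x] add_left_mono[of "t - x" y x]
    by (auto simp: min_def)
  then show ?thesis by (simp only: e)
qed

lemma sum_clipped_reset:
  "t < top \<Longrightarrow> (\<Sum>m<n. clipped_reset t Rv m) = min (\<Sum>m<n. Rv m) t"
  by (induction n) (simp_all add: clipped_reset_def min_add_min_diff_ennreal)

lemma clipped_reset_le: "clipped_reset t Rv m \<le> Rv m"
  by (simp add: clipped_reset_def)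

lemma clipped_reset_eq_0: "t < top \<Longrightarrow> t \<le> (\<Sum>j<m. Rv j) \<Longrightarrow> clipped_reset t Rv m = 0"
  by (simp add: clipped_reset_def diff_eq_0_ennreal)

lemma clipped_reset_less_reset_min:
  assumes t: "t < top" and l: "l \<ge> 1" and reset: "t < reset_time l (Tv, Rv)"
  shows "clipped_reset t Rv m = 0 \<or> clipped_reset t Rv m < reset_min l Tv m"
proof (cases "\<exists>j. reset_min l Tv j \<le> Rv j")
  case True
  then obtain J where J: "reset_time l (Tv, Rv) = (\<Sum>j<J. Rv j) + reset_min l Tv J"
    and stop: "reset_min l Tv J \<le> Rv J" and before: "\<And>j. j < J \<Longrightarrow> Rv j < reset_min l Tv j"
    using reset_time_stopping_stage[of l "(Tv, Rv)"] by auto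
  have tJ: "t < (\<Sum>j<J. Rv j) + reset_min l Tv J" using reset J by simp
  consider "m < J" | "m = J" | "J < m" by linarith
  then show ?thesis
  proof cases
    case 1
    then show ?thesis using before[OF 1] clipped_reset_le order.strict_trans1 by blast
  next
    case 2
    show ?thesis
    proof (cases "t \<le> (\<Sum>j<J. Rv j)")
      case True
      then show ?thesis using 2 t by (simp add: clipped_reset_eq_0)
    next
      case False
      then have "(\<Sum>j<J. Rv j) < top" using t order.strict_trans not_le by blast
      then have "t - (\<Sum>j<J. Rv j) < reset_min l Tv J"
        using tJ False by (subst minus_less_iff_ennreal) (auto simp: add.commute)
      then show ?thesis using 2 by (simp add: clipped_reset_def min.strict_coboundedI2)
    qed
  next
    case 3
    have "(\<Sum>j<J. Rv j) + reset_min l Tv J \<le> (\<Sum>j<Suc J. Rv j)" using stop by (simp add: add_left_mono)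
    also have "\<dots> \<le> (\<Sum>j<m. Rv j)" using 3 by (intro sum_mono2) auto
    finally have "t \<le> (\<Sum>j<m. Rv j)" using tJ by simp
    then show ?thesis using t by (simp add: clipped_reset_eq_0)
  qed
next
  case False
  then show ?thesis using clipped_reset_le order.strict_trans1 not_le by blast
qed

text \<open>If the resets up to stage n overshoot t, the clipped resets sum to t; otherwise they are the
  resets themselves.\<close>

lemma prod_weibull_tail_clipped_reset_le:
  assumes k: "0 < k" "k \<le> 1" and l: "l \<ge> 1" and t: "t < top"
  shows "(\<Prod>m<n. weibull_tail k (clipped_reset t Rv m) ^ (l ^ m))
    \<le> weibull_tail k t + (\<Prod>m<n. weibull_tail k (Rv m))"
proof -
  have "(\<Prod>m<n. weibull_tail k (clipped_reset t Rv m) ^ (l ^ m)) \<le> (\<Prod>m<n. weibull_tail k (clipped_reset t Rv m))"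
    using l power_decreasing[of 1 "l ^ _" "weibull_tail k _"] weibull_tail_le_1
    by (intro prod_mono_ennreal) simp
  also have "\<dots> \<le> weibull_tail k t + (\<Prod>m<n. weibull_tail k (Rv m))"
  proof (cases "t \<le> (\<Sum>m<n. Rv m)")
    case True
    have "(\<Prod>m<n. weibull_tail k (clipped_reset t Rv m)) \<le> weibull_tail k (\<Sum>m<n. clipped_reset t Rv m)"
      by (rule prod_weibull_tail_le_sum[OF k]) simp
    also have "\<dots> = weibull_tail k t" using True t by (simp add: sum_clipped_reset)
    finally show ?thesis by (simp add: add_increasing2)
  next
    case False
    have "clipped_reset t Rv m = Rv m" if "m < n" for m
    proof -
      have "(\<Sum>j<m. Rv j) + Rv m \<le> (\<Sum>j<n. Rv j)"
        using that by (simp add: sum_mono2 flip: sum.lessThan_Suc)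
      then have "Rv m + (\<Sum>j<m. Rv j) \<le> t" using False by (simp add: add.commute)
      then show ?thesis by (simp add: clipped_reset_def ennreal_le_minus_iff)
    qed
    then show ?thesis by (simp add: add_increasing)
  qed
  finally show ?thesis .
qed

lemma nn_integral_PiM_prod_lessThan:
  assumes M: "prob_space M" and h: "h \<in> borel_measurable M"
  shows "(\<integral>\<^sup>+ f. (\<Prod>m<n. h (f m)) \<partial>PiM UNIV (\<lambda>_::nat. M)) = (\<integral>\<^sup>+ x. h x \<partial>M) ^ n"
proof -
  interpret M: prob_space M by (rule M)
  interpret product_prob_space "\<lambda>_::nat. M" UNIV by unfold_locales
  have "(\<integral>\<^sup>+ f. (\<Prod>m<n. h (f m)) \<partial>PiM UNIV (\<lambda>_. M))
      = (\<integral>\<^sup>+ f. (\<Prod>m<n. h (restrict f {..<n} m)) \<partial>PiM UNIV (\<lambda>_. M))"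
    by (intro nn_integral_cong prod.cong) auto
  also have "\<dots> = (\<integral>\<^sup>+ f. (\<Prod>m<n. h (f m)) \<partial>distr (PiM UNIV (\<lambda>_. M)) (PiM {..<n} (\<lambda>_. M)) (\<lambda>f. restrict f {..<n}))"
    using h by (subst nn_integral_distr) (auto intro!: measurable_restrict_subset)
  also have "\<dots> = (\<integral>\<^sup>+ f. (\<Prod>m<n. h (f m)) \<partial>PiM {..<n} (\<lambda>_. M))"
    by (subst distr_PiM_restrict_finite) auto
  also have "\<dots> = (\<Prod>m<n. \<integral>\<^sup>+ x. h x \<partial>M)"
    using h by (subst product_nn_integral_prod) auto
  finally show ?thesis by simp
qed

lemma nn_integral_weibull_tail_less_1:
  assumes k: "0 < k" and R: "reset_law_cond R"
  shows "(\<integral>\<^sup>+ x. weibull_tail k x \<partial>R) < 1"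
proof -
  have RP: "prob_space R" and Rs: "sets R = sets borel" and Rpos: "emeasure R {0<..} > 0"
    using R by (auto simp: reset_law_cond_def)
  interpret prob_space R by (rule RP)
  have h: "weibull_tail k \<in> borel_measurable R"
    unfolding measurable_cong_sets[OF Rs refl] by (rule measurable_weibull_tail)
  have "\<not> (AE x in R. 1 \<le> weibull_tail k x)"
  proof
    assume "AE x in R. 1 \<le> weibull_tail k x"
    then have "AE x in R. x \<notin> {0<..}"
      by eventually_elim (use weibull_tail_less_1[OF k] in \<open>auto simp: not_le[symmetric]\<close>)
    then have "emeasure R {0<..} = 0"
      by (subst (asm) AE_iff_null_sets[symmetric]) (auto simp: Rs)
    with Rpos show False by simp
  qed
  moreover have "(\<integral>\<^sup>+ x. weibull_tail k x \<partial>R) \<le> (\<integral>\<^sup>+ x. 1 \<partial>R)"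
    by (intro nn_integral_mono weibull_tail_le_1)
  ultimately have "(\<integral>\<^sup>+ x. weibull_tail k x \<partial>R) < (\<integral>\<^sup>+ x. 1 \<partial>R)"
    using h weibull_tail_le_1 emeasure_space_1
    by (intro nn_integral_less) (auto simp: top_unique)
  then show ?thesis using emeasure_space_1 by simp
qed

lemma emeasure_reset_time_greater_given_resets:
  assumes k: "0 < k" "k \<le> 1" and l: "l \<ge> 1" and t: "t < top"
  shows "emeasure (PiM UNIV (\<lambda>_::nat \<times> nat. weibull_law k)) {Tv. t < reset_time l (Tv, Rv)}
    \<le> weibull_tail k t + (\<Prod>m<n. weibull_tail k (Rv m))"
proof -
  let ?T = "weibull_law k"
  let ?PT = "PiM UNIV (\<lambda>_::nat \<times> nat. ?T)"
  have T: "prob_space ?T" "sets ?T = sets borel" using prob_space_weibull_law[OF k(1)] by auto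
  define X where "X m = (if clipped_reset t Rv m = 0 then UNIV else {clipped_reset t Rv m<..})" for m
  define I where "I = Sigma {..<n} (\<lambda>m. {..<l ^ m})"
  have X: "X m \<in> sets borel" "emeasure ?T (X m) = weibull_tail k (clipped_reset t Rv m)" for m
    using prob_space.emeasure_space_1[OF T(1)] sets_eq_imp_space_eq[OF T(2)]
    by (auto simp: X_def emeasure_weibull_law_greaterThan[OF k(1)])
  have "{Tv. t < reset_time l (Tv, Rv)} \<subseteq> {Tv. \<forall>x\<in>I. Tv x \<in> X (fst x)}"
  proof safe
    fix Tv m i assume "t < reset_time l (Tv, Rv)" "(m, i) \<in> I"
    then show "Tv (m, i) \<in> X (fst (m, i))"
      using clipped_reset_less_reset_min[OF t l, of Tv Rv m] less_reset_min_iff[OF l]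
      by (auto simp: X_def I_def)
  qed
  then have "emeasure ?PT {Tv. t < reset_time l (Tv, Rv)} \<le> emeasure ?PT {Tv. \<forall>x\<in>I. Tv x \<in> X (fst x)}"
    using T X by (intro emeasure_mono sets_PiM_cylinder) (auto simp: I_def)
  also have "\<dots> = (\<Prod>x\<in>I. weibull_tail k (clipped_reset t Rv (fst x)))"
    using T X by (subst emeasure_PiM_cylinder) (auto simp: I_def)
  also have "\<dots> = (\<Prod>m<n. \<Prod>i<l ^ m. weibull_tail k (clipped_reset t Rv m))"
    unfolding I_def by (subst prod.Sigma) (auto simp: split_beta)
  also have "\<dots> = (\<Prod>m<n. weibull_tail k (clipped_reset t Rv m) ^ (l ^ m))"
    by simp
  also have "\<dots> \<le> weibull_tail k t + (\<Prod>m<n. weibull_tail k (Rv m))"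
    by (rule prod_weibull_tail_clipped_reset_le[OF k l t])
  finally show ?thesis .
qed

lemma reset_law_weibull_tail_le:
  fixes R :: "ennreal measure"
  assumes k: "0 < k" "k \<le> 1" and l: "l \<ge> 1" and R: "prob_space R" "sets R = sets borel"
    and t: "t < top"
  shows "emeasure (reset_law (weibull_law k) R l) {t<..}
    \<le> weibull_tail k t + (\<integral>\<^sup>+ x. weibull_tail k x \<partial>R) ^ n"
proof -
  let ?T = "weibull_law k"
  let ?PT = "PiM UNIV (\<lambda>_::nat \<times> nat. ?T)" and ?PR = "PiM UNIV (\<lambda>_::nat. R)"
  let ?A = "reset_time l -` {t<..}"
  have T: "prob_space ?T" "sets ?T = sets borel" using prob_space_weibull_law[OF k(1)] by auto
  interpret P: pair_prob_space ?PT ?PR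
    using T R by (intro pair_prob_space.intro pair_sigma_finite.intro prob_space_imp_sigma_finite
        prob_space_PiM) auto
  have A: "?A \<in> sets (?PT \<Otimes>\<^sub>M ?PR)"
    using measurable_sets[OF measurable_reset_time[OF T(2) R(2)], of "{t<..}" l]
    by (simp add: space_reset_space[OF T(2) R(2), unfolded reset_space_def] reset_space_def)
  have h: "weibull_tail k \<in> borel_measurable R"
    unfolding measurable_cong_sets[OF R(2) refl] by (rule measurable_weibull_tail)
  have "emeasure (reset_law ?T R l) {t<..} = (\<integral>\<^sup>+ Rv. emeasure ?PT {Tv. t < reset_time l (Tv, Rv)} \<partial>?PR)"
    using emeasure_reset_law_greaterThan[OF T(2) R(2)] P.emeasure_pair_measure_alt2[OF A]
    by (simp add: reset_space_def vimage_def)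
  also have "\<dots> \<le> (\<integral>\<^sup>+ Rv. weibull_tail k t + (\<Prod>m<n. weibull_tail k (Rv m)) \<partial>?PR)"
    by (intro nn_integral_mono emeasure_reset_time_greater_given_resets[OF k l t])
  also have "\<dots> = weibull_tail k t + (\<integral>\<^sup>+ x. weibull_tail k x \<partial>R) ^ n"
    using h P.M2.emeasure_space_1
    by (simp add: nn_integral_add nn_integral_PiM_prod_lessThan[OF R(1) h])
  finally show ?thesis .
qed

lemma st_le_reset_law_weibull:
  assumes k: "0 < k" "k \<le> 1" and l: "l \<ge> 1" and R: "reset_law_cond R"
  shows "st_le (reset_law (weibull_law k) R l) (weibull_law k)"
  unfolding st_le_def
proof (intro allI impI)
  fix t :: ennreal assume "t \<noteq> top"
  define q where "q = (\<integral>\<^sup>+ x. weibull_tail k x \<partial>R)"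
  have "q < 1" unfolding q_def by (rule nn_integral_weibull_tail_less_1[OF k(1) R])
  then obtain q' where q': "q = ennreal q'" "0 \<le> q'" "q' < 1"
    by (cases q) (auto simp: ennreal_less_one_iff)
  have "(\<lambda>n. ennreal (q' ^ n)) \<longlonglongrightarrow> ennreal 0"
    using q' by (intro tendsto_ennrealI LIMSEQ_power_zero) auto
  then have "(\<lambda>n. weibull_tail k t + q ^ n) \<longlonglongrightarrow> weibull_tail k t + 0"
    using q' by (intro tendsto_add tendsto_const) (simp add: ennreal_power)
  moreover have "emeasure (reset_law (weibull_law k) R l) {t<..} \<le> weibull_tail k t + q ^ n" for n
    unfolding q_def using R \<open>t \<noteq> top\<close>
    by (intro reset_law_weibull_tail_le[OF k l]) (auto simp: reset_law_cond_def top.not_eq_extremum)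
  ultimately have "emeasure (reset_law (weibull_law k) R l) {t<..} \<le> weibull_tail k t"
    using LIMSEQ_le_const by fastforce
  then show "emeasure (reset_law (weibull_law k) R l) {t<..} \<le> emeasure (weibull_law k) {t<..}"
    by (simp add: emeasure_weibull_law_greaterThan[OF k(1)])
qed

section \<open>The analytic conditions\<close>

lemma exists_powr_add_less_1:
  fixes k :: real assumes k: "k > 1" and l: "l \<ge> 1"
  shows "\<exists>\<delta>. 0 < \<delta> \<and> \<delta> < 1/4 \<and> (1 - \<delta>) powr k + real l * (2 * \<delta>) powr k < 1"
proof -
  define C where "C = real l * 2 powr k"
  have C: "C > 0" using l by (simp add: C_def)
  define \<delta> where "\<delta> = min (1/8) ((1 / (2 * C)) powr (1 / (k - 1)))"
  have \<delta>: "0 < \<delta>" "\<delta> < 1/4" using C by (auto simp: \<delta>_def)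
  have "\<delta> powr (k - 1) \<le> ((1 / (2 * C)) powr (1 / (k - 1))) powr (k - 1)"
    using \<delta> k by (intro powr_mono2) (auto simp: \<delta>_def)
  also have "\<dots> = 1 / (2 * C)" using k C by (simp add: powr_powr)
  finally have "\<delta> powr (k - 1) \<le> 1 / (2 * C)" .
  then have "C * (\<delta> powr (k - 1) * \<delta>) \<le> C * (1 / (2 * C) * \<delta>)"
    using \<delta> C by (intro mult_left_mono mult_right_mono) auto
  moreover have "real l * (2 * \<delta>) powr k = C * (\<delta> powr (k - 1) * \<delta>)"
    using \<delta> by (simp add: C_def powr_mult powr_diff)
  ultimately have "real l * (2 * \<delta>) powr k \<le> \<delta> / 2" using C by simp
  moreover have "(1 - \<delta>) powr k \<le> (1 - \<delta>) powr 1"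
    using \<delta> k by (intro powr_mono') auto
  ultimately show ?thesis using \<delta> by (intro exI[of _ \<delta>]) auto
qed

lemma one_less_mult_exp_inverse: "0 < (x::real) \<Longrightarrow> 1 < x * exp (1 / x)"
  using exp_ge_add_one_self[of "1 / x"] by (simp add: field_simps)

lemma powr_add_powr_ge_1:
  fixes k a :: real
  assumes k: "0 < k" "k \<le> 1" and l: "l \<ge> 1" and a: "0 \<le> a" "a \<le> 1"
  shows "a powr k + real l * (1 - a) powr k \<ge> 1"
proof -
  have "a \<le> a powr k" "1 - a \<le> (1 - a) powr k" using a k by (auto intro!: powr_ge_self)
  moreover have "(1 - a) powr k \<le> real l * (1 - a) powr k"
    using l by (intro mult_le_cancel_right1[THEN iffD2]) auto
  ultimately show ?thesis by linarith
qed

lemma exists_powr_add_powr_less_1: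
  fixes k :: real assumes k: "k > 1" and l: "l \<ge> 1"
  shows "\<exists>a. 0 \<le> a \<and> a \<le> 1 \<and> a powr k + real l * (1 - a) powr k < 1"
proof -
  obtain \<delta> where \<delta>: "0 < \<delta>" "\<delta> < 1/4" "(1 - \<delta>) powr k + real l * (2 * \<delta>) powr k < 1"
    using exists_powr_add_less_1[OF k l] by blast
  have "real l * \<delta> powr k \<le> real l * (2 * \<delta>) powr k"
    using \<delta> k by (intro mult_left_mono powr_mono2) auto
  then show ?thesis using \<delta> by (intro exI[of _ "1 - \<delta>"]) auto
qed

lemma interval_integral_01_eq_LINT: "(LBINT u=0..1. f u) = (LINT u|lborel. indicator {0..1::real} u *\<^sub>R f u)"
  using interval_integral_Icc[of 0 1 f]
  by (simp add: zero_ereal_def one_ereal_def set_lebesgue_integral_def)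

lemma integral_exp_powr_le_1:
  fixes k t :: real assumes k: "0 < k" "k \<le> 1" and l: "l \<ge> 1" and t: "t > 0"
  shows "(LBINT u=0..1. exp (- (t powr k) * (u powr k + real l * (1 - u) powr k - 1))) \<le> 1"
proof -
  define g where "g u = exp (- (t powr k) * (u powr k + real l * (1 - u) powr k - 1))" for u
  have cont: "continuous_on {0..1} g"
    unfolding g_def using k by (intro continuous_intros continuous_on_powr') auto
  have "integrable lborel (\<lambda>u. indicator {0..1::real} u *\<^sub>R g u)"
    using borel_integrable_atLeastAtMost'[OF cont] by (simp add: set_integrable_def)
  then have "(LINT u|lborel. indicator {0..1::real} u *\<^sub>R g u) \<le> (LINT u|lborel. indicator {0..1::real} u)"
  proof (rule integral_mono)
    fix u :: real
    have "u \<in> {0..1} \<Longrightarrow> g u \<le> 1"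
      using powr_add_powr_ge_1[OF k l, of u] t by (simp add: g_def mult_nonneg_nonneg)
    then show "indicator {0..1} u *\<^sub>R g u \<le> indicator {0..1} u"
      by (simp split: split_indicator)
  qed auto
  then show ?thesis unfolding interval_integral_01_eq_LINT g_def by simp
qed

lemma integral_exp_powr_gt_1:
  fixes k :: real assumes k: "k > 1" and l: "l \<ge> 1"
  shows "\<exists>t>0. (LBINT u=0..1. exp (- (t powr k) * (u powr k + real l * (1 - u) powr k - 1))) > 1"
proof -
  obtain \<delta> where \<delta>: "0 < \<delta>" "\<delta> < 1/4" "(1 - \<delta>) powr k + real l * (2 * \<delta>) powr k < 1"
    using exists_powr_add_less_1[OF k l] by blast
  define \<eta> where "\<eta> = 1 - ((1 - \<delta>) powr k + real l * (2 * \<delta>) powr k)"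
  have \<eta>: "\<eta> > 0" using \<delta> by (simp add: \<eta>_def)
  define t where "t = (1 / (\<delta> * \<eta>)) powr (1 / k)"
  have t: "t > 0" "t powr k * \<eta> = 1 / \<delta>" using \<delta> \<eta> k by (simp_all add: t_def powr_powr)
  define g where "g u = exp (- (t powr k) * (u powr k + real l * (1 - u) powr k - 1))" for u
  have lower: "exp (1 / \<delta>) \<le> g u" if u: "u \<in> {1 - 2 * \<delta>..1 - \<delta>}" for u
  proof -
    have "u powr k \<le> (1 - \<delta>) powr k" "(1 - u) powr k \<le> (2 * \<delta>) powr k"
      using u \<delta> k by (auto intro!: powr_mono2)
    then have "u powr k + real l * (1 - u) powr k - 1 \<le> - \<eta>"
      using mult_left_mono[of "(1 - u) powr k" "(2 * \<delta>) powr k" "real l"] by (simp add: \<eta>_def)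
    then have "t powr k * (u powr k + real l * (1 - u) powr k - 1) \<le> t powr k * - \<eta>"
      by (rule mult_left_mono) simp
    then show ?thesis using t by (simp add: g_def)
  qed
  have cont: "continuous_on {0..1} g"
    unfolding g_def using k by (intro continuous_intros continuous_on_powr') auto
  have "integrable lborel (\<lambda>u. indicator {0..1::real} u *\<^sub>R g u)"
    using borel_integrable_atLeastAtMost'[OF cont] by (simp add: set_integrable_def)
  then have "(LINT u|lborel. exp (1 / \<delta>) * indicator {1 - 2 * \<delta>..1 - \<delta>} u)
      \<le> (LINT u|lborel. indicator {0..1::real} u *\<^sub>R g u)"
  proof (rule integral_mono[rotated])
    fix u :: real
    show "exp (1 / \<delta>) * indicator {1 - 2 * \<delta>..1 - \<delta>} u \<le> indicator {0..1} u *\<^sub>R g u"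
      using lower[of u] \<delta> by (auto simp: g_def split: split_indicator)
  qed (use \<delta> in auto)
  moreover have "(LINT u|lborel. exp (1 / \<delta>) * indicator {1 - 2 * \<delta>..1 - \<delta>} u) = \<delta> * exp (1 / \<delta>)"
    using \<delta> by simp
  ultimately show ?thesis
    using one_less_mult_exp_inverse[OF \<delta>(1)] t(1) unfolding interval_integral_01_eq_LINT g_def
    by (intro exI[of _ t]) (simp add: mult.commute)
qed

section \<open>Counterexamples for k greater than 1\<close>

lemma weibull_tail_mult_power:
  fixes k \<tau> \<delta> :: real
  assumes "0 \<le> \<tau>" "0 \<le> \<delta>" "\<delta> \<le> 1"
  shows "weibull_tail k (ennreal (\<tau> * (1 - \<delta>))) * weibull_tail k (ennreal (\<tau> * (2 * \<delta>))) ^ l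
    = ennreal (exp (- (\<tau> powr k * ((1 - \<delta>) powr k + real l * (2 * \<delta>) powr k))))"
proof -
  have "(\<tau> * (1 - \<delta>)) powr k = \<tau> powr k * (1 - \<delta>) powr k" "(\<tau> * (2 * \<delta>)) powr k = \<tau> powr k * (2 * \<delta>) powr k"
    using assms by (simp_all add: powr_mult)
  then have "exp (- ((\<tau> * (1 - \<delta>)) powr k)) * exp (- ((\<tau> * (2 * \<delta>)) powr k)) ^ l
      = exp (- (\<tau> powr k * ((1 - \<delta>) powr k + real l * (2 * \<delta>) powr k)))"
    by (simp add: exp_add[symmetric] exp_of_nat_mult[symmetric] algebra_simps)
  then show ?thesis
    using assms by (simp add: weibull_tail_ennreal ennreal_power ennreal_mult'[symmetric])
qed

lemma exists_exp_rate_gain: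
  fixes W K a b c \<tau> :: real
  assumes "\<tau> * W < K * (b - a)"
  shows "\<exists>\<mu>>0. W < W * exp (- \<tau> * \<mu>) + K * ((exp (- a * \<mu>) - exp (- b * \<mu>)) * exp (- c * \<mu>))"
proof -
  define g where "g \<mu> = W * exp (- \<tau> * \<mu>) + K * ((exp (- a * \<mu>) - exp (- b * \<mu>)) * exp (- c * \<mu>))"
    for \<mu>
  have "DERIV g 0 :> K * (b - a) - \<tau> * W"
    unfolding g_def by (auto intro!: derivative_eq_intros simp: algebra_simps)
  then obtain d where d: "d > 0" "\<And>h. 0 < h \<Longrightarrow> h < d \<Longrightarrow> g 0 < g (0 + h)"
    using DERIV_pos_inc_right assms by (metis diff_gt_0_iff_gt)
  then have "g 0 < g (d / 2)" by simp
  then show ?thesis using d(1) by (intro exI[of _ "d / 2"]) (simp add: g_def)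
qed

lemma not_st_le_reset_law_weibull_dirac:
  fixes k :: real assumes k: "k > 1" and l: "l \<ge> 1"
  shows "\<exists>r>0. \<not> st_le (reset_law (weibull_law k) (dirac_law r) l) (weibull_law k)"
proof -
  obtain \<delta> where \<delta>: "0 < \<delta>" "\<delta> < 1/4" "(1 - \<delta>) powr k + real l * (2 * \<delta>) powr k < 1"
    using exists_powr_add_less_1[OF k l] by blast
  define r where "r = 1 - \<delta>"
  have r: "0 < r" "r \<le> 1" "2 * \<delta> < r" using \<delta> by (auto simp: r_def)
  have k0: "k > 0" using k by simp
  have W: "prob_space (weibull_law k)" "sets (weibull_law k) = sets borel"
    using prob_space_weibull_law[OF k0] by auto
  have "1 \<le> ennreal r + ennreal (2 * \<delta>)"
    using \<delta> by (simp add: r_def ennreal_plus[symmetric] del: ennreal_plus)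
  then have "emeasure (weibull_law k) {1<..} * emeasure (dirac_law r) {1<..}
      + emeasure (weibull_law k) {ennreal r<..} * emeasure (weibull_law k) {ennreal (2 * \<delta>)<..} ^ l
        * (emeasure (dirac_law r) {ennreal r} * emeasure (dirac_law r) {ennreal (2 * \<delta>)<..})
      \<le> emeasure (reset_law (weibull_law k) (dirac_law r) l) {1<..}"
    using r by (intro reset_law_tail_lower_bound[OF W prob_space_dirac_law sets_dirac_law l]) auto
  moreover have "emeasure (dirac_law r) {ennreal r} = 1" "emeasure (dirac_law r) {ennreal (2 * \<delta>)<..} = 1"
    using r \<delta> by (simp_all add: dirac_law_def ennreal_less_iff)
  ultimately have "ennreal (exp (- ((1 - \<delta>) powr k + real l * (2 * \<delta>) powr k)))
      \<le> emeasure (reset_law (weibull_law k) (dirac_law r) l) {1<..}"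
    using weibull_tail_mult_power[of 1 \<delta> k l] \<delta>
    by (simp add: r_def emeasure_weibull_law_greaterThan[OF k0] order.trans[OF add_increasing[OF zero_le order_refl]])
  moreover have "emeasure (weibull_law k) {1<..} < ennreal (exp (- ((1 - \<delta>) powr k + real l * (2 * \<delta>) powr k)))"
    using \<delta> by (simp add: emeasure_weibull_law_greaterThan[OF k0] weibull_tail_def ennreal_less_iff)
  ultimately have "emeasure (weibull_law k) {1<..} < emeasure (reset_law (weibull_law k) (dirac_law r) l) {1<..}"
    by simp
  then have "\<not> st_le (reset_law (weibull_law k) (dirac_law r) l) (weibull_law k)"
    unfolding st_le_def by (auto intro!: exI[of _ 1] simp: not_le)
  then show ?thesis using r(1) by blast
qed

lemma reset_law_weibull_exp_tail_ge:
  fixes k \<mu> \<tau> \<delta> :: real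
  assumes k: "k > 0" and l: "l \<ge> 1" and \<mu>: "\<mu> > 0" and \<tau>: "\<tau> > 0" and \<delta>: "0 < \<delta>" "\<delta> < 1/4"
  defines "a \<equiv> \<tau> * (1 - 2 * \<delta>)" and "b \<equiv> \<tau> * (1 - \<delta>)" and "c \<equiv> \<tau> * (2 * \<delta>)"
    and "K \<equiv> exp (- (\<tau> powr k * ((1 - \<delta>) powr k + real l * (2 * \<delta>) powr k)))"
  shows "ennreal (exp (- (\<tau> powr k)) * exp (- \<tau> * \<mu>) + K * ((exp (- a * \<mu>) - exp (- b * \<mu>)) * exp (- c * \<mu>)))
    \<le> emeasure (reset_law (weibull_law k) (exp_law \<mu>) l) {ennreal \<tau><..}"
proof -
  have abc: "0 \<le> a" "a \<le> b" "b \<le> \<tau>" "0 \<le> c"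
    using \<delta> \<tau> by (auto simp: a_def b_def c_def)
  have W: "prob_space (weibull_law k)" "sets (weibull_law k) = sets borel"
    using prob_space_weibull_law[OF k] by auto
  have E: "prob_space (exp_law \<mu>)" "sets (exp_law \<mu>) = sets borel"
    using prob_space_exp_law[OF \<mu>] by auto
  have "ennreal \<tau> \<le> ennreal a + ennreal c"
    using abc by (simp add: a_def c_def algebra_simps flip: ennreal_plus)
  then have "emeasure (weibull_law k) {ennreal \<tau><..} * emeasure (exp_law \<mu>) {ennreal \<tau><..}
      + emeasure (weibull_law k) {ennreal b<..} * emeasure (weibull_law k) {ennreal c<..} ^ l
        * (emeasure (exp_law \<mu>) {ennreal a<..ennreal b} * emeasure (exp_law \<mu>) {ennreal c<..})
      \<le> emeasure (reset_law (weibull_law k) (exp_law \<mu>) l) {ennreal \<tau><..}"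
    using abc by (intro reset_law_tail_lower_bound[OF W E l]) auto
  moreover have "emeasure (weibull_law k) {ennreal b<..} * emeasure (weibull_law k) {ennreal c<..} ^ l
      = ennreal K"
    using weibull_tail_mult_power[of \<tau> \<delta> k l] \<tau> \<delta>
    by (simp add: K_def b_def c_def emeasure_weibull_law_greaterThan[OF k])
  moreover have "exp (- b * \<mu>) \<le> exp (- a * \<mu>)"
    using abc \<mu> by (simp add: mult_right_mono)
  ultimately show ?thesis
    using abc \<tau> \<mu>
    by (simp add: emeasure_weibull_law_greaterThan[OF k] weibull_tail_ennreal emeasure_exp_law_greaterThan
        emeasure_exp_law_greaterThanAtMost K_def ennreal_plus ennreal_mult')
qed

lemma not_st_le_reset_law_weibull_exp:
  fixes k :: real assumes k: "k > 1" and l: "l \<ge> 1"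
  shows "\<exists>\<mu>>0. \<not> st_le (reset_law (weibull_law k) (exp_law \<mu>) l) (weibull_law k)"
proof -
  have k0: "k > 0" using k by simp
  obtain \<delta> where \<delta>: "0 < \<delta>" "\<delta> < 1/4" "(1 - \<delta>) powr k + real l * (2 * \<delta>) powr k < 1"
    using exists_powr_add_less_1[OF k l] by blast
  define \<eta> where "\<eta> = 1 - ((1 - \<delta>) powr k + real l * (2 * \<delta>) powr k)"
  have \<eta>: "\<eta> > 0" using \<delta> by (simp add: \<eta>_def)
  \<comment> \<open>The time scale is chosen so that the surviving path gains the factor exp (1 / \<delta>) over the
    Weibull tail, which outweighs the loss \<tau> \<mu> W at first order in \<mu>.\<close>
  define \<tau> where "\<tau> = (1 / (\<delta> * \<eta>)) powr (1 / k)"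
  have \<tau>: "\<tau> > 0" "\<tau> powr k * \<eta> = 1 / \<delta>" using \<delta> \<eta> k by (simp_all add: \<tau>_def powr_powr)
  define W K where "W = exp (- (\<tau> powr k))"
    and "K = exp (- (\<tau> powr k * ((1 - \<delta>) powr k + real l * (2 * \<delta>) powr k)))"
  have "K = W * exp (1 / \<delta>)"
    using \<tau>(2) by (simp add: K_def W_def \<eta>_def algebra_simps flip: exp_add)
  then have "\<tau> * W < K * (\<tau> * (1 - \<delta>) - \<tau> * (1 - 2 * \<delta>))"
    using one_less_mult_exp_inverse[OF \<delta>(1)] \<tau>(1) by (simp add: W_def algebra_simps)
  then obtain \<mu> where \<mu>: "\<mu> > 0" and gain: "W < W * exp (- \<tau> * \<mu>)
      + K * ((exp (- (\<tau> * (1 - 2 * \<delta>)) * \<mu>) - exp (- (\<tau> * (1 - \<delta>)) * \<mu>)) * exp (- (\<tau> * (2 * \<delta>)) * \<mu>))"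
    using exists_exp_rate_gain by blast
  have "emeasure (weibull_law k) {ennreal \<tau><..} = ennreal W"
    using \<tau> by (simp add: W_def emeasure_weibull_law_greaterThan[OF k0] weibull_tail_ennreal)
  also have "\<dots> < ennreal (W * exp (- \<tau> * \<mu>)
      + K * ((exp (- (\<tau> * (1 - 2 * \<delta>)) * \<mu>) - exp (- (\<tau> * (1 - \<delta>)) * \<mu>)) * exp (- (\<tau> * (2 * \<delta>)) * \<mu>)))"
    using gain by (intro ennreal_lessI) (auto simp: W_def intro: order.strict_trans[rotated])
  also have "\<dots> \<le> emeasure (reset_law (weibull_law k) (exp_law \<mu>) l) {ennreal \<tau><..}"
    unfolding W_def K_def by (rule reset_law_weibull_exp_tail_ge[OF k0 l \<mu> \<tau>(1) \<delta>(1,2)])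
  finally have "emeasure (weibull_law k) {ennreal \<tau><..} < emeasure (reset_law (weibull_law k) (exp_law \<mu>) l) {ennreal \<tau><..}" .
  then have "\<not> st_le (reset_law (weibull_law k) (exp_law \<mu>) l) (weibull_law k)"
    unfolding st_le_def by (auto intro!: exI[of _ "ennreal \<tau>"] simp: not_le)
  then show ?thesis using \<mu> by blast
qed

theorem mainTheorem17:
  fixes k :: real and l :: nat
  assumes "k > 0" and "l \<ge> 2"
  shows "(k \<le> 1 \<longleftrightarrow> (\<forall>R. reset_law_cond R \<longrightarrow> st_le (reset_law (weibull_law k) R l) (weibull_law k)))
    \<and> (k \<le> 1 \<longleftrightarrow> (\<forall>r::real. r > 0 \<longrightarrow> st_le (reset_law (weibull_law k) (dirac_law r) l) (weibull_law k)))
    \<and> (k \<le> 1 \<longleftrightarrow> (\<forall>a::real. 0 \<le> a \<and> a \<le> 1 \<longrightarrow> a powr k + real l * (1 - a) powr k \<ge> 1))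
    \<and> (k \<le> 1 \<longleftrightarrow> (\<forall>\<mu>::real. \<mu> > 0 \<longrightarrow> st_le (reset_law (weibull_law k) (exp_law \<mu>) l) (weibull_law k)))
    \<and> (k \<le> 1 \<longleftrightarrow> (\<forall>t::real. t > 0 \<longrightarrow>
          (LBINT u=0..1. exp (- (t powr k) * (u powr k + real l * (1 - u) powr k - 1))) \<le> 1))"
proof -
  have k: "k > 0" and l: "l \<ge> 1" using assms by auto
  show ?thesis
    using st_le_reset_law_weibull[OF k _ l] reset_law_cond_dirac_law reset_law_cond_exp_law
      powr_add_powr_ge_1[OF k _ l] integral_exp_powr_le_1[OF k _ l]
      not_st_le_reset_law_weibull_dirac[OF _ l] exists_powr_add_powr_less_1[OF _ l]
      not_st_le_reset_law_weibull_exp[OF _ l] integral_exp_powr_gt_1[OF _ l]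
    by (meson not_le)
qed

end
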